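(* Consider the FlexPD-G iterates described in the context with $\alpha,\beta>0$ and integer $T\ge1$. For any $\eta_2,\eta_3>0$ and every $k\ge0$, \[\|x^{k+1,T}-x^*\|_{P_G}^2+c_2\|x^{k+1,T}-x^{k+1,T-1}\|^2+c_3\|x^k-x^*\|^2\le\|x^{k+1,T-1}-x^*\|^2-c_1\|x^{k+1,T}-x^*\|^2+\frac{\alpha}{\beta}\|\lambda^k-\lambda^*\|^2-\frac{\alpha}{\beta}\|\lambda^{k+1}-\lambda^*\|^2+\alpha\rho(B)\|x^k-x^*\|^2,\] where $P_G=2\alpha mI-\alpha(\eta_2+\eta_3)I-\alpha\beta A'A-\alpha\rho(B)I$, $c_1=1+\alpha\rho(B)$, $c_2=1-\frac{\alpha L^2}{\eta_2}$, and $c_3=\alpha\rho(B)\big(1-\frac{\rho(B)}{\eta_3}\big)$.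
   Context: Setting: $n$ agents are connected by a connected undirected graph with edge set $\mathcal E$, $\epsilon=|\mathcal E|$. For $x\in\mathbb R^n$ let $f(x)=\sum_{i=1}^n f_i(x_i)$, where each $f_i:\mathbb R\to\mathbb R$ is twice differentiable with $m\le f_i''\le L$ for constants $0<m\le L$; $\nabla f(x)=(f_1'(x_1),\dots,f_n'(x_n))'$. $A\in\mathbb R^{\epsilon\times n}$ is the edge–node incidence matrix (null space spanned by the all-ones vector). $B\in\mathbb R^{n\times n}$ is symmetric positive semidefinite with the same null space as $A$, off-diagonal entries nonzero only on edges, and $\rho(B)<m$. $x^*$ is the unique minimizer of $f$ subject to $Ax=0$ and $\lambda^*$ a Lagrange multiplier with $\nabla f(x^* )+A'\lambda^*=0$, $Ax^*=0$, $Bx^*=0$, chosen in the column space of $A$. FlexPD-G: given $\alpha,\beta>0$, $T\ge1$, $x^0$ arbitrary, $\lambda^0=0$; for $k\ge0$: $x^{k+1,0}=x^k$; for $t=1,\dots,T$, $x^{k+1,t}=x^{k+1,t-1}-\alpha\nabla f(x^{k+1,t-1})-\alpha A'\lambda^k-\alpha Bx^k$; then $x^{k+1}=x^{k+1,T}$, $\lambda^{k+1}=\lambda^k+\beta Ax^{k+1}$. Notation: $\rho(S)$ largest eigenvalue of symmetric $S$; $\|v\|_S^2:=v'Sv$ for any symmetric $S$; $\|\cdot\|$ Euclidean norm. *)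

theory Defs
  imports "HOL-Analysis.Analysis"
begin

text \<open>Edge-node incidence matrix of a graph whose edges (type 'e) have
  an (arbitrary) orientation src e -> dst e: row e has +1 at src e, -1 at dst e.\<close>
definition incidence :: "('e \<Rightarrow> 'n) \<Rightarrow> ('e \<Rightarrow> 'n) \<Rightarrow> real^'n^'e" where
  "incidence src dst = (\<chi> e i. if i = src e then 1 else if i = dst e then -1 else 0)"

definition adjacent :: "('e \<Rightarrow> 'n) \<Rightarrow> ('e \<Rightarrow> 'n) \<Rightarrow> 'n \<Rightarrow> 'n \<Rightarrow> bool" where
  "adjacent src dst i j = (\<exists>e. (src e = i \<and> dst e = j) \<or> (src e = j \<and> dst e = i))"

definition max_eig :: "real^'n^'n \<Rightarrow> real" where
  "max_eig S = Max {\<mu>. \<exists>v. v \<noteq> 0 \<and> S *v v = \<mu> *\<^sub>R v}"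

definition qnorm2 :: "real^'n^'n \<Rightarrow> real^'n \<Rightarrow> real" where
  "qnorm2 S v = v \<bullet> (S *v v)"

definition grad :: "('n \<Rightarrow> real \<Rightarrow> real) \<Rightarrow> real^'n \<Rightarrow> real^'n" where
  "grad f' x = (\<chi> i. f' i (x $ i))"

end

theory Submission
  imports Defs
begin

text \<open>
  Only the last inner gradient step enters. With a = x^{k+1,T} - x^* and
  d = x^{k+1,T-1} - x^{k+1,T}, the KKT conditions give
  d = \<alpha> (\<nabla>f(x^{k+1,T-1}) - \<nabla>f(x^*)) + \<alpha> A'(\<lambda>^k - \<lambda>^*) + \<alpha> B (x^k - x^*).
  Expanding |a + d|^2 and |\<lambda>^{k+1} - \<lambda>^*|^2 = |\<lambda>^k - \<lambda>^* + \<beta> A a|^2, the multiplier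
  cross terms cancel once the dual square is weighted by \<alpha>/\<beta>. The gradient term is
  bounded below by strong monotonicity of \<nabla>f, its L-Lipschitz continuity and Young's
  inequality with weight \<eta>_2; the B-term by Cauchy-Schwarz for the semidefinite form
  of B, weighted by \<eta>_3, together with the Rayleigh bound v'Bv \<le> \<rho>(B) |v|^2.
\<close>

lemma inner_transpose_matrix_vector:
  "(x::real^'m) \<bullet> (transpose A *v y) = (A *v x) \<bullet> (y::real^'k)"
  by (metis dot_lmul_matrix inner_commute transpose_matrix_vector)

lemma inner_symmetric_matrix_vector:
  assumes "transpose B = B"
  shows "(x::real^'n) \<bullet> (B *v y) = y \<bullet> (B *v x)"
  by (metis assms inner_transpose_matrix_vector inner_commute)

lemma psd_cross_term_bound:
  fixes B :: "real^'n^'n"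
  assumes sym: "transpose B = B" and psd: "\<And>v. 0 \<le> v \<bullet> (B *v v)" and s: "0 < s"
  shows "- 2 * (a \<bullet> (B *v b)) \<le> s * (a \<bullet> (B *v a)) + (b \<bullet> (B *v b)) / s"
proof -
  have "0 \<le> (s *\<^sub>R a + b) \<bullet> (B *v (s *\<^sub>R a + b))" by (rule psd)
  also have "\<dots> = s * (s * (a \<bullet> (B *v a)) + 2 * (a \<bullet> (B *v b)) + (b \<bullet> (B *v b)) / s)"
    using s inner_symmetric_matrix_vector[OF sym, of b a]
    by (simp add: matrix_vector_right_distrib matrix_vector_mult_scaleR inner_add_left
        inner_add_right field_simps)
  finally show ?thesis
    using s by (simp add: zero_le_mult_iff)
qed

lemma psd_form_eq_zero_imp_kernel:
  fixes C :: "real^'n^'n"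
  assumes sym: "transpose C = C" and psd: "\<And>v. 0 \<le> v \<bullet> (C *v v)"
    and zero: "v \<bullet> (C *v v) = 0"
  shows "C *v v = 0"
proof -
  define w where "w = C *v v"
  define K where "K = w \<bullet> (C *v w)"
  have K: "0 \<le> K" unfolding K_def by (rule psd)
  have neg: "C *v (- w) = - (C *v w)"
    using matrix_vector_mult_diff_distrib[of C 0 w] by simp
  have bound: "2 * (w \<bullet> w) \<le> s * K" if "0 < s" for s
    using psd_cross_term_bound[OF sym psd that, of "- w" v] zero neg
    by (simp add: K_def w_def)
  have "w \<bullet> w \<le> 0"
  proof (rule field_le_epsilon)
    fix e :: real
    assume e: "0 < e"
    have "2 * (w \<bullet> w) \<le> (2 * e / (K + 1)) * K"
      using e K by (intro bound) simp
    also have "\<dots> \<le> 2 * e"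
      using e K by (simp add: field_simps)
    finally show "w \<bullet> w \<le> 0 + e" by simp
  qed
  then show ?thesis
    unfolding w_def by (metis inner_gt_zero_iff not_less)
qed

lemma symmetric_matrix_top_eigenvector:
  fixes B :: "real^'n^'n"
  assumes sym: "transpose B = B"
  shows "\<exists>v \<mu>. v \<noteq> 0 \<and> B *v v = \<mu> *\<^sub>R v \<and> (\<forall>a. a \<bullet> (B *v a) \<le> \<mu> * (norm a)\<^sup>2)"
proof -
  let ?S = "sphere (0::real^'n) 1"
  have "?S \<noteq> {}"
    using vector_choose_size[of 1] by (auto simp: dist_norm)
  moreover have "continuous_on ?S (\<lambda>v. v \<bullet> (B *v v))"
    by (intro continuous_intros continuous_on_compose2[OF matrix_vector_mult_linear_continuous_on]) auto
  ultimately obtain v where v: "v \<in> ?S"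
    and vmax: "\<And>u. u \<in> ?S \<Longrightarrow> u \<bullet> (B *v u) \<le> v \<bullet> (B *v v)"
    using continuous_attains_sup[OF compact_sphere] by blast
  define \<mu> where "\<mu> = v \<bullet> (B *v v)"
  have norm_v: "norm v = 1" using v by simp
  have rayleigh: "a \<bullet> (B *v a) \<le> \<mu> * (norm a)\<^sup>2" for a
  proof (cases "a = 0")
    case False
    have "(a /\<^sub>R norm a) \<bullet> (B *v (a /\<^sub>R norm a)) \<le> \<mu>"
      unfolding \<mu>_def using False by (intro vmax) simp
    moreover have "(a /\<^sub>R norm a) \<bullet> (B *v (a /\<^sub>R norm a)) = (a \<bullet> (B *v a)) / (norm a)\<^sup>2"
      by (simp add: matrix_vector_mult_scaleR power2_eq_square divide_inverse)
    ultimately show ?thesis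
      using False by (simp add: pos_divide_le_eq)
  qed simp
  \<comment> \<open>the maximiser \<open>v\<close> is an eigenvector: \<open>\<mu> I - B\<close> is semidefinite and its form vanishes at \<open>v\<close>\<close>
  define C where "C = \<mu> *\<^sub>R mat 1 - B"
  have C_apply: "C *v a = \<mu> *\<^sub>R a - B *v a" for a
    by (simp add: C_def matrix_vector_mult_diff_rdistrib scaleR_matrix_vector_assoc[symmetric])
  have "C *v v = 0"
  proof (rule psd_form_eq_zero_imp_kernel)
    have transpose_diff: "transpose (X - Y) = transpose X - transpose Y" for X Y :: "real^'n^'n"
      by (simp add: transpose_def vec_eq_iff)
    show "transpose C = C"
      using sym unfolding C_def by (simp add: transpose_diff transpose_scalar)
    show "0 \<le> a \<bullet> (C *v a)" for a
      using rayleigh[of a] by (simp add: C_apply inner_diff_right power2_norm_eq_inner)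
    show "v \<bullet> (C *v v) = 0"
      using norm_v by (simp add: C_apply inner_diff_right \<mu>_def power2_norm_eq_inner[symmetric])
  qed
  then have "B *v v = \<mu> *\<^sub>R v" by (simp add: C_apply)
  with norm_v rayleigh show ?thesis by (metis norm_zero zero_neq_one)
qed

lemma symmetric_eigenvectors_orthogonal:
  fixes B :: "real^'n^'n"
  assumes sym: "transpose B = B"
    and "B *v v = \<mu> *\<^sub>R v" "B *v w = \<nu> *\<^sub>R w" "\<mu> \<noteq> \<nu>"
  shows "orthogonal v w"
proof -
  have "\<mu> * (v \<bullet> w) = \<nu> * (v \<bullet> w)"
    using inner_symmetric_matrix_vector[OF sym, of v w] assms(2,3) by (auto simp: inner_commute)
  with \<open>\<mu> \<noteq> \<nu>\<close> show ?thesis by (simp add: orthogonal_def)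
qed

lemma finite_eigenvalues_symmetric:
  fixes B :: "real^'n^'n"
  assumes sym: "transpose B = B"
  shows "finite {\<mu>. \<exists>v. v \<noteq> 0 \<and> B *v v = \<mu> *\<^sub>R v}" (is "finite ?E")
proof -
  define V where "V \<mu> = (SOME v. v \<noteq> 0 \<and> B *v v = \<mu> *\<^sub>R v)" for \<mu>
  have V: "V \<mu> \<noteq> 0" "B *v V \<mu> = \<mu> *\<^sub>R V \<mu>" if "\<mu> \<in> ?E" for \<mu>
    using someI_ex[of "\<lambda>v. v \<noteq> 0 \<and> B *v v = \<mu> *\<^sub>R v"] that unfolding V_def by auto
  have "inj_on V ?E"
  proof (rule inj_onI)
    fix \<mu> \<nu> assume "\<mu> \<in> ?E" "\<nu> \<in> ?E" "V \<mu> = V \<nu>"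
    then have "\<mu> *\<^sub>R V \<mu> = \<nu> *\<^sub>R V \<mu>" using V(2) by (metis (no_types))
    with V(1)[OF \<open>\<mu> \<in> ?E\<close>] show "\<mu> = \<nu>" by simp
  qed
  moreover have "independent (V ` ?E)"
  proof (rule pairwise_orthogonal_independent)
    show "pairwise orthogonal (V ` ?E)"
    proof (rule pairwiseI)
      fix p q assume "p \<in> V ` ?E" "q \<in> V ` ?E" "p \<noteq> q"
      then obtain \<mu> \<nu> where "\<mu> \<in> ?E" "\<nu> \<in> ?E" "p = V \<mu>" "q = V \<nu>" "\<mu> \<noteq> \<nu>"
        by blast
      then show "orthogonal p q"
        using symmetric_eigenvectors_orthogonal[OF sym V(2) V(2)] by blast
    qed
    show "0 \<notin> V ` ?E" using V(1) by force
  qed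
  then have "finite (V ` ?E)" by (rule independent_bound[THEN conjunct1])
  ultimately show ?thesis by (rule finite_imageD[rotated])
qed

lemma quadratic_form_le_max_eig:
  fixes B :: "real^'n^'n"
  assumes "transpose B = B"
  shows "a \<bullet> (B *v a) \<le> max_eig B * (norm a)\<^sup>2"
proof -
  obtain v \<mu> where v: "v \<noteq> 0" "B *v v = \<mu> *\<^sub>R v"
    and rayleigh: "a \<bullet> (B *v a) \<le> \<mu> * (norm a)\<^sup>2"
    using symmetric_matrix_top_eigenvector[OF assms] by blast
  have "\<mu> \<le> max_eig B"
    unfolding max_eig_def using finite_eigenvalues_symmetric[OF assms] v by (intro Max_ge) blast+
  with rayleigh show ?thesis
    by (meson mult_right_mono order_trans zero_le_power2)
qed

lemma max_eig_nonneg: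
  fixes B :: "real^'n^'n"
  assumes "transpose B = B" and psd: "\<And>v. 0 \<le> v \<bullet> (B *v v)"
  shows "0 \<le> max_eig B"
proof -
  obtain v :: "real^'n" where "norm v = 1"
    using vector_choose_size zero_le_one by blast
  then show ?thesis
    using psd[of v] quadratic_form_le_max_eig[OF assms(1), of v] by simp
qed

lemma psd_cross_term_le_max_eig:
  fixes B :: "real^'n^'n"
  assumes sym: "transpose B = B" and psd: "\<And>v. 0 \<le> v \<bullet> (B *v v)" and \<eta>: "0 < \<eta>"
  shows "- 2 * (a \<bullet> (B *v b)) \<le> \<eta> * (norm a)\<^sup>2 + (max_eig B)\<^sup>2 / \<eta> * (norm b)\<^sup>2"
proof (cases "max_eig B = 0")
  case True
  have "- 2 * (a \<bullet> (B *v b)) \<le> a \<bullet> (B *v a) + b \<bullet> (B *v b)"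
    using psd_cross_term_bound[OF sym psd, of 1] by simp
  also have "\<dots> \<le> 0"
    using quadratic_form_le_max_eig[OF sym, of a] quadratic_form_le_max_eig[OF sym, of b] True
    by simp
  finally have "- 2 * (a \<bullet> (B *v b)) \<le> 0" .
  moreover have "0 \<le> \<eta> * (norm a)\<^sup>2" using \<eta> by simp
  ultimately show ?thesis using True by simp
next
  case False
  define \<rho> where "\<rho> = max_eig B"
  have \<rho>: "0 < \<rho>" using False max_eig_nonneg[OF sym psd] by (simp add: \<rho>_def)
  \<comment> \<open>the weight \<open>\<eta> / \<rho>\<close> produces the constants \<open>\<eta>\<close> and \<open>\<rho>\<^sup>2 / \<eta>\<close>\<close>
  have "- 2 * (a \<bullet> (B *v b)) \<le> \<eta> / \<rho> * (a \<bullet> (B *v a)) + (b \<bullet> (B *v b)) / (\<eta> / \<rho>)"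
    using \<rho> \<eta> by (intro psd_cross_term_bound[OF sym psd]) simp
  also have "\<dots> \<le> \<eta> / \<rho> * (\<rho> * (norm a)\<^sup>2) + \<rho> * (norm b)\<^sup>2 / (\<eta> / \<rho>)"
    using \<rho> \<eta> quadratic_form_le_max_eig[OF sym, of a] quadratic_form_le_max_eig[OF sym, of b]
    by (intro add_mono mult_left_mono divide_right_mono) (simp_all add: \<rho>_def)
  also have "\<dots> = \<eta> * (norm a)\<^sup>2 + \<rho>\<^sup>2 / \<eta> * (norm b)\<^sup>2"
    using \<rho> \<eta> by (simp add: field_simps power2_eq_square)
  finally show ?thesis by (simp add: \<rho>_def)
qed

lemma MVT_any_order:
  assumes "\<And>y. (g has_real_derivative g' y) (at y)"
  shows "\<exists>\<xi>. g p - g q = g' \<xi> * (p - q)"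
proof (cases p q rule: linorder_cases)
  case less
  then obtain \<xi> where "g q - g p = (q - p) * g' \<xi>"
    using MVT2[of p q g g'] assms by blast
  then show ?thesis by (intro exI[of _ \<xi>]) (simp add: algebra_simps)
next
  case greater
  then obtain \<xi> where "g p - g q = (p - q) * g' \<xi>"
    using MVT2[of q p g g'] assms by blast
  then show ?thesis by (intro exI[of _ \<xi>]) (simp add: algebra_simps)
qed simp

lemma grad_strongly_monotone:
  assumes d2: "\<And>i y. (f' i has_real_derivative f'' i y) (at y)"
    and lower: "\<And>i y. m \<le> f'' i y"
  shows "m * (norm (y - x))\<^sup>2 \<le> (y - x) \<bullet> (grad f' y - grad f' (x::real^'n))"
proof -
  have "m * (y$i - x$i)\<^sup>2 \<le> (y$i - x$i) * (f' i (y$i) - f' i (x$i))" for i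
  proof -
    obtain \<xi> where "f' i (y$i) - f' i (x$i) = f'' i \<xi> * (y$i - x$i)"
      using MVT_any_order[OF d2] by blast
    then show ?thesis
      using lower[of i \<xi>] by (simp add: power2_eq_square mult_right_mono mult.commute mult.left_commute)
  qed
  then show ?thesis
    unfolding power2_norm_eq_inner inner_vec_def sum_distrib_left
    by (intro sum_mono) (simp add: grad_def power2_eq_square)
qed

lemma grad_lipschitz:
  assumes d2: "\<And>i y. (f' i has_real_derivative f'' i y) (at y)"
    and bound: "\<And>i y. \<bar>f'' i y\<bar> \<le> L"
  shows "(norm (grad f' y - grad f' x))\<^sup>2 \<le> L\<^sup>2 * (norm (y - (x::real^'n)))\<^sup>2"
proof -
  have "(f' i (y$i) - f' i (x$i))\<^sup>2 \<le> L\<^sup>2 * (y$i - x$i)\<^sup>2" for i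
  proof -
    obtain \<xi> where "f' i (y$i) - f' i (x$i) = f'' i \<xi> * (y$i - x$i)"
      using MVT_any_order[OF d2] by blast
    moreover have "(f'' i \<xi>)\<^sup>2 \<le> L\<^sup>2"
      using power_mono[OF bound[of i \<xi>], of 2] by simp
    ultimately show ?thesis
      by (simp add: power_mult_distrib mult_right_mono)
  qed
  then show ?thesis
    unfolding power2_norm_eq_inner inner_vec_def sum_distrib_left
    by (intro sum_mono) (simp add: grad_def power2_eq_square)
qed

lemma young_inner:
  fixes a b :: "real^'n"
  assumes "0 < \<eta>"
  shows "- 2 * (a \<bullet> b) \<le> \<eta> * (norm a)\<^sup>2 + (norm b)\<^sup>2 / \<eta>"
  using psd_cross_term_bound[of "mat 1", OF _ _ assms]
  by (simp add: power2_norm_eq_inner)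

lemma grad_inner_lower_bound:
  assumes d2: "\<And>i y. (f' i has_real_derivative f'' i y) (at y)"
    and curv: "\<And>i y. m \<le> f'' i y \<and> f'' i y \<le> L" and "0 \<le> m" and \<eta>: "0 < \<eta>"
  shows "(2 * m - \<eta>) * (norm (y - x))\<^sup>2 - L\<^sup>2 / \<eta> * (norm (z - y))\<^sup>2
    \<le> 2 * ((y - x) \<bullet> (grad f' z - grad f' (x::real^'n)))"
proof -
  have "m * (norm (y - x))\<^sup>2 \<le> (y - x) \<bullet> (grad f' y - grad f' x)"
    using grad_strongly_monotone[where f' = f' and f'' = f'', OF d2] curv by blast
  moreover have "- 2 * ((y - x) \<bullet> (grad f' z - grad f' y))
      \<le> \<eta> * (norm (y - x))\<^sup>2 + (norm (grad f' z - grad f' y))\<^sup>2 / \<eta>"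
    using \<eta> by (rule young_inner)
  moreover have "(norm (grad f' z - grad f' y))\<^sup>2 / \<eta> \<le> L\<^sup>2 / \<eta> * (norm (z - y))\<^sup>2"
  proof -
    have "\<bar>f'' i t\<bar> \<le> L" for i t
      using curv[of i t] \<open>0 \<le> m\<close> by simp
    then show ?thesis
      using grad_lipschitz[OF d2, where y = z and x = y] \<eta> by (simp add: divide_right_mono)
  qed
  moreover have "(y - x) \<bullet> (grad f' z - grad f' x)
      = (y - x) \<bullet> (grad f' y - grad f' x) + (y - x) \<bullet> (grad f' z - grad f' y)"
    by (simp add: inner_diff_right)
  ultimately show ?thesis by (simp add: algebra_simps)
qed

lemma qnorm2_scaled_identity_minus_gram:
  fixes A :: "real^'n^'e"
  shows "qnorm2 (c *\<^sub>R mat 1 - s *\<^sub>R (transpose A ** A)) v = c * (norm v)\<^sup>2 - s * (norm (A *v v))\<^sup>2"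
  by (simp add: qnorm2_def matrix_vector_mult_diff_rdistrib scaleR_matrix_vector_assoc[symmetric]
      matrix_vector_mul_assoc[symmetric] inner_diff_right inner_transpose_matrix_vector
      power2_norm_eq_inner del: transpose_matrix_vector)

lemma primal_dual_step_identity:
  fixes a d g w :: "real^'n" and l :: "real^'e" and A :: "real^'n^'e"
  assumes d: "d = \<alpha> *\<^sub>R (g + transpose A *v l + w)" and "\<beta> \<noteq> 0"
  shows "(norm (a + d))\<^sup>2 + \<alpha> / \<beta> * (norm l)\<^sup>2 - \<alpha> / \<beta> * (norm (l + \<beta> *\<^sub>R (A *v a)))\<^sup>2
    = (norm a)\<^sup>2 + (norm d)\<^sup>2 + 2 * \<alpha> * (a \<bullet> g) + 2 * \<alpha> * (a \<bullet> w) - \<alpha> * \<beta> * (norm (A *v a))\<^sup>2"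
proof -
  have "(norm (a + d))\<^sup>2 = (norm a)\<^sup>2 + 2 * (a \<bullet> d) + (norm d)\<^sup>2"
    by (simp add: power2_norm_eq_inner inner_add_left inner_add_right inner_commute)
  moreover have "a \<bullet> d = \<alpha> * (a \<bullet> g) + \<alpha> * ((A *v a) \<bullet> l) + \<alpha> * (a \<bullet> w)"
    by (simp add: d inner_add_right inner_transpose_matrix_vector distrib_left del: transpose_matrix_vector)
  moreover have "(norm (l + \<beta> *\<^sub>R (A *v a)))\<^sup>2
      = (norm l)\<^sup>2 + 2 * \<beta> * ((A *v a) \<bullet> l) + \<beta>\<^sup>2 * (norm (A *v a))\<^sup>2"
    unfolding power2_norm_eq_inner
    by (simp add: inner_add_left inner_add_right inner_commute power2_eq_square algebra_simps)
  ultimately show ?thesis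
    using \<open>\<beta> \<noteq> 0\<close> by (simp add: field_simps power2_eq_square)
qed

lemma flexpd_gradient_step_estimate:
  fixes f' f'' :: "'n::finite \<Rightarrow> real \<Rightarrow> real"
    and A :: "real^'n^'e" and B :: "real^'n^'n"
    and z y u xs :: "real^'n" and lam lam' ls :: "real^'e"
  assumes step: "y = z - \<alpha> *\<^sub>R grad f' z - \<alpha> *\<^sub>R (transpose A *v lam) - \<alpha> *\<^sub>R (B *v u)"
    and dual: "lam' = lam + \<beta> *\<^sub>R (A *v y)"
    and kkt: "grad f' xs + transpose A *v ls = 0" and A_xs: "A *v xs = 0" and B_xs: "B *v xs = 0"
    and d2: "\<And>i t. (f' i has_real_derivative f'' i t) (at t)"
    and curv: "\<And>i t. m \<le> f'' i t \<and> f'' i t \<le> L" and m: "0 \<le> m"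
    and B_sym: "transpose B = B" and B_psd: "\<And>v. 0 \<le> v \<bullet> (B *v v)"
    and \<alpha>: "0 < \<alpha>" and \<beta>: "0 < \<beta>" and \<eta>\<^sub>2: "0 < \<eta>\<^sub>2" and \<eta>\<^sub>3: "0 < \<eta>\<^sub>3"
  shows
    "let \<rho> = max_eig B;
         P = (2 * \<alpha> * m - \<alpha> * (\<eta>\<^sub>2 + \<eta>\<^sub>3) - \<alpha> * \<rho>) *\<^sub>R mat 1 - (\<alpha> * \<beta>) *\<^sub>R (transpose A ** A);
         c1 = 1 + \<alpha> * \<rho>;
         c2 = 1 - \<alpha> * L\<^sup>2 / \<eta>\<^sub>2;
         c3 = \<alpha> * \<rho> * (1 - \<rho> / \<eta>\<^sub>3)
     in qnorm2 P (y - xs) + c2 * (norm (y - z))\<^sup>2 + c3 * (norm (u - xs))\<^sup>2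
        \<le> (norm (z - xs))\<^sup>2 - c1 * (norm (y - xs))\<^sup>2
          + \<alpha> / \<beta> * (norm (lam - ls))\<^sup>2 - \<alpha> / \<beta> * (norm (lam' - ls))\<^sup>2
          + \<alpha> * \<rho> * (norm (u - xs))\<^sup>2"
proof -
  define \<rho> where "\<rho> = max_eig B"
  define a where "a = y - xs"
  define d where "d = z - y"
  define g where "g = grad f' z - grad f' xs"
  define w where "w = B *v (u - xs)"
  define l where "l = lam - ls"
  have "d = \<alpha> *\<^sub>R (g + transpose A *v l + w)"
    using step kkt B_xs
    by (simp add: d_def g_def w_def l_def matrix_vector_mult_diff_distrib algebra_simps
        eq_neg_iff_add_eq_0[symmetric] del: transpose_matrix_vector)
  then have identity: "(norm (a + d))\<^sup>2 + \<alpha> / \<beta> * (norm l)\<^sup>2 - \<alpha> / \<beta> * (norm (l + \<beta> *\<^sub>R (A *v a)))\<^sup>2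
      = (norm a)\<^sup>2 + (norm d)\<^sup>2 + 2 * \<alpha> * (a \<bullet> g) + 2 * \<alpha> * (a \<bullet> w) - \<alpha> * \<beta> * (norm (A *v a))\<^sup>2"
    by (rule primal_dual_step_identity) (use \<beta> in simp)
  have "(2 * m - \<eta>\<^sub>2) * (norm a)\<^sup>2 - L\<^sup>2 / \<eta>\<^sub>2 * (norm d)\<^sup>2 \<le> 2 * (a \<bullet> g)"
    unfolding a_def d_def g_def using grad_inner_lower_bound[OF d2 curv m \<eta>\<^sub>2] .
  then have grad_bound: "\<alpha> * ((2 * m - \<eta>\<^sub>2) * (norm a)\<^sup>2 - L\<^sup>2 / \<eta>\<^sub>2 * (norm d)\<^sup>2) \<le> \<alpha> * (2 * (a \<bullet> g))"
    by (rule mult_left_mono) (use \<alpha> in simp)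
  have "- 2 * (a \<bullet> w) \<le> \<eta>\<^sub>3 * (norm a)\<^sup>2 + \<rho>\<^sup>2 / \<eta>\<^sub>3 * (norm (u - xs))\<^sup>2"
    unfolding w_def \<rho>_def using psd_cross_term_le_max_eig[OF B_sym B_psd \<eta>\<^sub>3] .
  then have B_bound: "\<alpha> * (- 2 * (a \<bullet> w)) \<le> \<alpha> * (\<eta>\<^sub>3 * (norm a)\<^sup>2 + \<rho>\<^sup>2 / \<eta>\<^sub>3 * (norm (u - xs))\<^sup>2)"
    by (rule mult_left_mono) (use \<alpha> in simp)
  have "z - xs = a + d" "y - z = - d" "lam' - ls = l + \<beta> *\<^sub>R (A *v a)"
    using dual A_xs by (simp_all add: a_def d_def l_def matrix_vector_mult_diff_distrib)
  then show ?thesis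
    using identity grad_bound B_bound
    unfolding Let_def \<rho>_def[symmetric] qnorm2_scaled_identity_minus_gram a_def[symmetric] l_def[symmetric]
    by (simp add: algebra_simps power2_eq_square)
qed

theorem lemma3p10:
  fixes f f' f'' :: "'n::finite \<Rightarrow> real \<Rightarrow> real"
    and src dst :: "'e::finite \<Rightarrow> 'n"
    and B :: "real^'n^'n"
    and m L \<alpha> \<beta> \<eta>\<^sub>2 \<eta>\<^sub>3 :: real and T :: nat
    and xs :: "real^'n" and ls :: "real^'e"
    and x :: "nat \<Rightarrow> real^'n" and xin :: "nat \<Rightarrow> nat \<Rightarrow> real^'n"
    and lam :: "nat \<Rightarrow> real^'e"
  defines "A \<equiv> incidence src dst"
  assumes simple: "\<And>e. src e \<noteq> dst e" "inj (\<lambda>e. {src e, dst e})"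
    and connected: "\<And>i j. (adjacent src dst)\<^sup>*\<^sup>* i j"
    and d1: "\<And>i y. (f i has_real_derivative f' i y) (at y)"
    and d2: "\<And>i y. (f' i has_real_derivative f'' i y) (at y)"
    and m_pos: "0 < m" and m_le_L: "m \<le> L"
    and curv: "\<And>i y. m \<le> f'' i y \<and> f'' i y \<le> L"
    and B_sym: "transpose B = B"
    and B_psd: "\<And>v. 0 \<le> v \<bullet> (B *v v)"
    and B_null: "{v. B *v v = 0} = {v. A *v v = 0}"
    and B_sparse: "\<And>i j. i \<noteq> j \<Longrightarrow> B $ i $ j \<noteq> 0 \<Longrightarrow> adjacent src dst i j"
    and rho_lt: "max_eig B < m"
    and xs_feas: "A *v xs = 0"
    and xs_min: "\<And>y. A *v y = 0 \<Longrightarrow> (\<Sum>i\<in>UNIV. f i (xs $ i)) \<le> (\<Sum>i\<in>UNIV. f i (y $ i))"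
    and kkt: "grad f' xs + transpose A *v ls = 0"
    and B_xs: "B *v xs = 0"
    and ls_range: "ls \<in> range (\<lambda>y. A *v y)"
    and \<alpha>_pos: "0 < \<alpha>" and \<beta>_pos: "0 < \<beta>" and T_ge: "1 \<le> T"
    and \<eta>_pos: "0 < \<eta>\<^sub>2" "0 < \<eta>\<^sub>3"
    and lam0: "lam 0 = 0"
    and inner0: "\<And>k. xin (Suc k) 0 = x k"
    and inner_step: "\<And>k t. 1 \<le> t \<Longrightarrow> t \<le> T \<Longrightarrow>
        xin (Suc k) t = xin (Suc k) (t - 1) - \<alpha> *\<^sub>R grad f' (xin (Suc k) (t - 1))
                        - \<alpha> *\<^sub>R (transpose A *v lam k) - \<alpha> *\<^sub>R (B *v x k)"
    and x_step: "\<And>k. x (Suc k) = xin (Suc k) T"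
    and lam_step: "\<And>k. lam (Suc k) = lam k + \<beta> *\<^sub>R (A *v x (Suc k))"
  shows
    "let \<rho> = max_eig B;
         P = (2 * \<alpha> * m - \<alpha> * (\<eta>\<^sub>2 + \<eta>\<^sub>3) - \<alpha> * \<rho>) *\<^sub>R mat 1 - (\<alpha> * \<beta>) *\<^sub>R (transpose A ** A);
         c1 = 1 + \<alpha> * \<rho>;
         c2 = 1 - \<alpha> * L\<^sup>2 / \<eta>\<^sub>2;
         c3 = \<alpha> * \<rho> * (1 - \<rho> / \<eta>\<^sub>3)
     in qnorm2 P (xin (Suc k) T - xs) + c2 * (norm (xin (Suc k) T - xin (Suc k) (T - 1)))\<^sup>2
          + c3 * (norm (x k - xs))\<^sup>2
        \<le> (norm (xin (Suc k) (T - 1) - xs))\<^sup>2 - c1 * (norm (xin (Suc k) T - xs))\<^sup>2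
          + \<alpha> / \<beta> * (norm (lam k - ls))\<^sup>2 - \<alpha> / \<beta> * (norm (lam (Suc k) - ls))\<^sup>2
          + \<alpha> * \<rho> * (norm (x k - xs))\<^sup>2"
proof -
  have step: "xin (Suc k) T = xin (Suc k) (T - 1) - \<alpha> *\<^sub>R grad f' (xin (Suc k) (T - 1))
      - \<alpha> *\<^sub>R (transpose A *v lam k) - \<alpha> *\<^sub>R (B *v x k)"
    using inner_step[of T k] T_ge by simp
  have dual: "lam (Suc k) = lam k + \<beta> *\<^sub>R (A *v xin (Suc k) T)"
    using lam_step x_step by simp
  show ?thesis
    using m_pos
    by (intro flexpd_gradient_step_estimate[OF step dual kkt xs_feas B_xs d2 curv _ B_sym B_psd
          \<alpha>_pos \<beta>_pos \<eta>_pos]) simp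
qed

end
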